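(* Let $f\colon K\to R$ be a homomorphism of (nonunital) rings. Assume that $f$ is either left t-unital or right t-unital. Then the ring $R$ is t-unital.
   Context: Rings are associative, not necessarily unital, and ring homomorphisms need not preserve units. A ring $R$ is t-unital if the multiplication map $R\otimes_R R\to R$ is an isomorphism. A left $K$-module $M$ is t-unital if $K\otimes_K M\to M$, $k\otimes m\mapsto km$, is an isomorphism, and a right $K$-module $N$ is t-unital if $N\otimes_K K\to N$ is an isomorphism. The homomorphism $f$ is left (resp. right) t-unital if $R$, with the left (resp. right) $K$-module structure induced by $f$, is a t-unital left (resp. right) $K$-module. *)

theory Defs
  imports Main "HOL-Library.Poly_Mapping"
begin

text \<open>Non-unital rings are modelled by Isabelle's type class ring
  (semiring plus abelian group, no unit).  Tensor products over a non-unital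
  ring K are built as the quotient of the free abelian group on N x M
  (finitely supported functions to int) by the subgroup generated by
  biadditivity and K-balancedness relations.\<close>

definition zsmul :: "int \<Rightarrow> 'a::ab_group_add \<Rightarrow> 'a" where
  "zsmul i a = (if 0 \<le> i then (\<Sum>_<nat i. a) else - (\<Sum>_<nat (- i). a))"

definition gen :: "'n \<Rightarrow> 'm \<Rightarrow> ('n \<times> 'm \<Rightarrow>\<^sub>0 int)" where
  "gen n m = Poly_Mapping.single (n, m) 1"

inductive_set tensor_rel ::
  "('n::ab_group_add \<Rightarrow> 'k \<Rightarrow> 'n) \<Rightarrow> ('k \<Rightarrow> 'm::ab_group_add \<Rightarrow> 'm)
     \<Rightarrow> ('n \<times> 'm \<Rightarrow>\<^sub>0 int) set"
  for ract lact where
  zero: "0 \<in> tensor_rel ract lact"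
| add_left: "gen (n + n') m - gen n m - gen n' m \<in> tensor_rel ract lact"
| add_right: "gen n (m + m') - gen n m - gen n m' \<in> tensor_rel ract lact"
| balanced: "gen (ract n k) m - gen n (lact k m) \<in> tensor_rel ract lact"
| diff: "x \<in> tensor_rel ract lact \<Longrightarrow> y \<in> tensor_rel ract lact
          \<Longrightarrow> x - y \<in> tensor_rel ract lact"

definition tensor_space ::
  "('n::ab_group_add \<Rightarrow> 'k \<Rightarrow> 'n) \<Rightarrow> ('k \<Rightarrow> 'm::ab_group_add \<Rightarrow> 'm)
     \<Rightarrow> ('n \<times> 'm \<Rightarrow>\<^sub>0 int) set set" where
  "tensor_space ract lact =
     UNIV // {(x, y). x - y \<in> tensor_rel ract lact}"

definition free_ext :: "('n \<times> 'm \<Rightarrow> 'a::ab_group_add) \<Rightarrow> ('n \<times> 'm \<Rightarrow>\<^sub>0 int) \<Rightarrow> 'a" where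
  "free_ext b x = (\<Sum>p\<in>Poly_Mapping.keys x. zsmul (Poly_Mapping.lookup x p) (b p))"

text \<open>The map N \<otimes>_K M \<rightarrow> T induced by the balanced map b (n \<otimes> m \<mapsto> b (n,m))
  is an isomorphism (of abelian groups; it is additive, so bijectivity suffices).\<close>
definition tensor_map_iso ::
  "('n::ab_group_add \<Rightarrow> 'k \<Rightarrow> 'n) \<Rightarrow> ('k \<Rightarrow> 'm::ab_group_add \<Rightarrow> 'm)
     \<Rightarrow> ('n \<times> 'm \<Rightarrow> 'a::ab_group_add) \<Rightarrow> bool" where
  "tensor_map_iso ract lact b =
     bij_betw (\<lambda>c. free_ext b (SOME x. x \<in> c)) (tensor_space ract lact) UNIV"

definition t_unital_left_module :: "('k::ring \<Rightarrow> 'm::ab_group_add \<Rightarrow> 'm) \<Rightarrow> bool" where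
  "t_unital_left_module lact =
     tensor_map_iso (\<lambda>a b. a * b) lact (\<lambda>(k, m). lact k m)"

definition t_unital_right_module :: "('n::ab_group_add \<Rightarrow> 'k::ring \<Rightarrow> 'n) \<Rightarrow> bool" where
  "t_unital_right_module ract =
     tensor_map_iso ract (\<lambda>a b. a * b) (\<lambda>(n, k). ract n k)"

definition t_unital_ring :: "'r::ring itself \<Rightarrow> bool" where
  "t_unital_ring _ =
     tensor_map_iso (\<lambda>a b. a * (b::'r)) (\<lambda>a b. a * b) (\<lambda>(r, s). r * s)"

definition ring_hom_nonunital :: "('k::ring \<Rightarrow> 'r::ring) \<Rightarrow> bool" where
  "ring_hom_nonunital f \<longleftrightarrow> (\<forall>a b. f (a + b) = f a + f b) \<and> (\<forall>a b. f (a * b) = f a * f b)"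

definition left_t_unital_hom :: "('k::ring \<Rightarrow> 'r::ring) \<Rightarrow> bool" where
  "left_t_unital_hom f = t_unital_left_module (\<lambda>k r. f k * r)"

definition right_t_unital_hom :: "('k::ring \<Rightarrow> 'r::ring) \<Rightarrow> bool" where
  "right_t_unital_hom f = t_unital_right_module (\<lambda>r k. r * f k)"

end

(* Suppose f is left t-unital, i.e. K \<otimes>_K R \<rightarrow> R, k \<otimes> r \<mapsto> f k * r, is an isomorphism.
   It factors as \<Phi> : K \<otimes>_K R \<rightarrow> R \<otimes>_R R, k \<otimes> r \<mapsto> f k \<otimes> r, followed by the
   multiplication of R, which is therefore surjective.  And \<Phi> is onto: writing
   r = \<Sum> f k\<^sub>i * r\<^sub>i gives r \<otimes> s = \<Sum> f k\<^sub>i \<otimes> r\<^sub>i * s.  Hence the multiplication is also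
   injective.  The right t-unital case is the mirror image.  As the tensor products are
   presented by generators and relations, an induced map is an isomorphism iff the map on the
   free abelian group is onto with kernel exactly the relations; the argument is run there. *)

theory Submission
  imports Defs
begin

lemma zsmul_0 [simp]: "zsmul 0 a = 0"
  by (simp add: zsmul_def)

lemma zsmul_1 [simp]: "zsmul 1 a = a"
  by (simp add: zsmul_def)

lemma zsmul_add_1: "zsmul (i + 1) a = zsmul i a + a"
proof (cases "i \<ge> 0")
  case True
  then have "nat (i + 1) = Suc (nat i)" by simp
  with True show ?thesis by (simp add: zsmul_def add.commute)
next
  case False
  then consider "i = -1" | "nat (- i) = Suc (nat (- (i + 1)))" "i + 1 < 0" by linarith
  then show ?thesis
    by cases (use False in \<open>simp_all add: zsmul_def\<close>)
qed

lemma zsmul_add: "zsmul (i + j) a = zsmul i a + zsmul j a"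
proof (induction j rule: int_induct[where k = 0])
  case base
  then show ?case by simp
next
  case (step1 j)
  then show ?case
    using zsmul_add_1[of "i + j" a] zsmul_add_1[of j a] by (simp add: add.assoc)
next
  case (step2 j)
  then show ?case
    using zsmul_add_1[of "i + (j - 1)" a] zsmul_add_1[of "j - 1" a] by (simp add: algebra_simps)
qed

lemma zsmul_minus: "zsmul (- i) a = - zsmul i a"
  using zsmul_add[of "- i" i a] by (simp add: eq_neg_iff_add_eq_0)

lemma free_ext_0 [simp]: "free_ext b 0 = 0"
  by (simp add: free_ext_def)

lemma free_ext_of [simp]: "free_ext b (frag_of p) = b p"
  by (simp add: free_ext_def)

lemma free_ext_gen [simp]: "free_ext b (gen n m) = b (n, m)"
  by (simp add: gen_def)

lemma free_ext_add:
  fixes x y :: "'n \<times> 'm \<Rightarrow>\<^sub>0 int"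
  shows "free_ext b (x + y) = free_ext b x + free_ext b y"
proof -
  let ?U = "Poly_Mapping.keys x \<union> Poly_Mapping.keys y"
  have over_U: "free_ext b z = (\<Sum>p\<in>?U. zsmul (Poly_Mapping.lookup z p) (b p))"
    if "Poly_Mapping.keys z \<subseteq> ?U" for z
    unfolding free_ext_def
    by (rule sum.mono_neutral_left[OF _ that]) (simp_all add: in_keys_iff)
  have "free_ext b (x + y) =
      (\<Sum>p\<in>?U. zsmul (Poly_Mapping.lookup x p) (b p) + zsmul (Poly_Mapping.lookup y p) (b p))"
    by (simp add: over_U keys_add lookup_add zsmul_add)
  also have "\<dots> = free_ext b x + free_ext b y"
    by (simp add: sum.distrib over_U)
  finally show ?thesis .
qed

lemma free_ext_minus: "free_ext b (- x) = - free_ext b x"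
  by (simp add: free_ext_def lookup_uminus zsmul_minus sum_negf)

lemma free_ext_diff: "free_ext b (x - y) = free_ext b x - free_ext b y"
  by (metis diff_conv_add_uminus free_ext_add free_ext_minus)

lemma free_ext_frag_extend: "free_ext b (frag_extend g x) = free_ext (\<lambda>p. free_ext b (g p)) x"
  using subset_UNIV
  by (induction x rule: frag_induction) (simp_all add: frag_extend_diff free_ext_diff)

lemma frag_extend_gen [simp]: "frag_extend g (gen n m) = g (n, m)"
  by (simp add: gen_def)

lemma tensor_rel_uminus: "x \<in> tensor_rel r l \<Longrightarrow> - x \<in> tensor_rel r l"
  by (metis diff_0 tensor_rel.diff tensor_rel.zero)

lemma tensor_rel_add: "x \<in> tensor_rel r l \<Longrightarrow> y \<in> tensor_rel r l \<Longrightarrow> x + y \<in> tensor_rel r l"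
  by (metis diff_minus_eq_add tensor_rel.diff tensor_rel_uminus)

lemma tensor_rel_gen_zero_left: "gen 0 m \<in> tensor_rel r l"
  using tensor_rel.add_left[of 0 0 m r l] tensor_rel_uminus by fastforce

lemma tensor_rel_gen_zero_right: "gen n 0 \<in> tensor_rel r l"
  using tensor_rel.add_right[of n 0 0 r l] tensor_rel_uminus by fastforce

lemma tensor_rel_gen_diff_left: "gen (a - b) m - (gen a m - gen b m) \<in> tensor_rel r l"
  using tensor_rel_uminus[OF tensor_rel.add_left[of "a - b" b m r l]] by (simp add: algebra_simps)

lemma tensor_rel_gen_diff_right: "gen n (a - b) - (gen n a - gen n b) \<in> tensor_rel r l"
  using tensor_rel_uminus[OF tensor_rel.add_right[of n "a - b" b r l]] by (simp add: algebra_simps)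

lemma tensor_rel_frag_extend_cong:
  assumes "\<And>p. u p - v p \<in> tensor_rel r l"
  shows "frag_extend u x - frag_extend v x \<in> tensor_rel r l"
  using subset_UNIV
proof (induction x rule: frag_induction)
  case zero
  then show ?case by (simp add: tensor_rel.zero)
next
  case (one p)
  then show ?case by (simp add: assms)
next
  case (diff x y)
  then show ?case
    using tensor_rel.diff[OF diff.IH] by (simp add: frag_extend_diff algebra_simps)
qed

lemma tensor_rel_gen_free_ext_left:
  "gen (free_ext b x) m - frag_extend (\<lambda>p. gen (b p) m) x \<in> tensor_rel r l"
  using subset_UNIV
proof (induction x rule: frag_induction)
  case zero
  then show ?case by (simp add: tensor_rel_gen_zero_left)
next
  case (one p)
  then show ?case by (simp add: tensor_rel.zero)
next
  case (diff x y)
  let ?u = "free_ext b x" and ?v = "free_ext b y"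
  have "gen (?u - ?v) m - frag_extend (\<lambda>p. gen (b p) m) (x - y) =
    (gen (?u - ?v) m - (gen ?u m - gen ?v m)) +
    ((gen ?u m - frag_extend (\<lambda>p. gen (b p) m) x) - (gen ?v m - frag_extend (\<lambda>p. gen (b p) m) y))"
    by (simp add: frag_extend_diff algebra_simps)
  then show ?case
    unfolding free_ext_diff by (metis tensor_rel_add tensor_rel_gen_diff_left tensor_rel.diff diff.IH)
qed

lemma tensor_rel_gen_free_ext_right:
  "gen n (free_ext b x) - frag_extend (\<lambda>p. gen n (b p)) x \<in> tensor_rel r l"
  using subset_UNIV
proof (induction x rule: frag_induction)
  case zero
  then show ?case by (simp add: tensor_rel_gen_zero_right)
next
  case (one p)
  then show ?case by (simp add: tensor_rel.zero)
next
  case (diff x y)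
  let ?u = "free_ext b x" and ?v = "free_ext b y"
  have "gen n (?u - ?v) - frag_extend (\<lambda>p. gen n (b p)) (x - y) =
    (gen n (?u - ?v) - (gen n ?u - gen n ?v)) +
    ((gen n ?u - frag_extend (\<lambda>p. gen n (b p)) x) - (gen n ?v - frag_extend (\<lambda>p. gen n (b p)) y))"
    by (simp add: frag_extend_diff algebra_simps)
  then show ?case
    unfolding free_ext_diff by (metis tensor_rel_add tensor_rel_gen_diff_right tensor_rel.diff diff.IH)
qed

lemma tensor_rel_frag_extend_gen_map:
  assumes g_add: "\<And>a b. g (a + b) = g a + g b" and h_add: "\<And>a b. h (a + b) = h a + h b"
    and g_r: "\<And>n k. g (r n k) = r' (g n) (\<phi> k)" and h_l: "\<And>k m. h (l k m) = l' (\<phi> k) (h m)"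
    and "x \<in> tensor_rel r l"
  shows "frag_extend (\<lambda>(n, m). gen (g n) (h m)) x \<in> tensor_rel r' l'"
  using \<open>x \<in> tensor_rel r l\<close>
proof induction
  case zero
  then show ?case by (simp add: tensor_rel.zero)
next
  case (add_left n n' m)
  then show ?case by (simp add: frag_extend_diff g_add tensor_rel.add_left)
next
  case (add_right n m m')
  then show ?case by (simp add: frag_extend_diff h_add tensor_rel.add_right)
next
  case (balanced n k m)
  then show ?case by (simp add: frag_extend_diff g_r h_l tensor_rel.balanced)
next
  case (diff x y)
  then show ?case by (simp add: frag_extend_diff tensor_rel.diff)
qed

lemma frag_extend_surj_mod_tensor_rel:
  assumes "\<And>n m. \<exists>y. gen n m - frag_extend g y \<in> tensor_rel r l"
  shows "\<exists>y. x - frag_extend g y \<in> tensor_rel r l"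
  using subset_UNIV
proof (induction x rule: frag_induction)
  case zero
  show ?case by (rule exI[of _ 0]) (simp add: tensor_rel.zero)
next
  case (one p)
  then show ?case using assms[of "fst p" "snd p"] by (simp add: gen_def)
next
  case (diff x x')
  then obtain y y' where "x - frag_extend g y \<in> tensor_rel r l" "x' - frag_extend g y' \<in> tensor_rel r l"
    by blast
  from tensor_rel.diff[OF this] show ?case
    by (intro exI[of _ "y - y'"]) (simp add: frag_extend_diff algebra_simps)
qed

text \<open>\<^const>\<open>univ\<close> f X = f (SOME x. x \<in> X) is the map occurring in \<^const>\<open>tensor_map_iso\<close>.\<close>

lemma bij_betw_univ_quotient_iff:
  assumes equiv: "equiv UNIV E" and respects: "f respects E"
  shows "bij_betw (univ f) (UNIV // E) UNIV \<longleftrightarrow> surj f \<and> (\<forall>x y. f x = f y \<longrightarrow> (x, y) \<in> E)"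
proof -
  have quotient: "UNIV // E = range (\<lambda>x. E `` {x})"
    by (auto simp: quotient_def)
  have univ_class: "univ f (E `` {x}) = f x" for x
    using univ_commute[OF equiv respects] by (simp add: proj_def)
  have "univ f ` (UNIV // E) = range f"
    unfolding quotient image_image univ_class ..
  moreover have "inj_on (univ f) (UNIV // E) \<longleftrightarrow> (\<forall>x y. f x = f y \<longrightarrow> (x, y) \<in> E)"
    unfolding quotient inj_on_image univ_class
    using eq_equiv_class_iff[OF equiv] by (auto simp: inj_on_def univ_class)
  ultimately show ?thesis
    by (auto simp: bij_betw_def)
qed

definition balanced_map ::
  "('n::ab_group_add \<Rightarrow> 'k \<Rightarrow> 'n) \<Rightarrow> ('k \<Rightarrow> 'm::ab_group_add \<Rightarrow> 'm)
    \<Rightarrow> ('n \<times> 'm \<Rightarrow> 'a::ab_group_add) \<Rightarrow> bool"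
  where "balanced_map r l b \<longleftrightarrow>
    (\<forall>n n' m. b (n + n', m) = b (n, m) + b (n', m)) \<and>
    (\<forall>n m m'. b (n, m + m') = b (n, m) + b (n, m')) \<and>
    (\<forall>n k m. b (r n k, m) = b (n, l k m))"

lemma free_ext_tensor_rel_eq_0:
  assumes "balanced_map r l b" and "x \<in> tensor_rel r l"
  shows "free_ext b x = 0"
  using assms(2) by induction (use assms(1) in \<open>auto simp: balanced_map_def free_ext_diff\<close>)

lemma tensor_map_iso_iff:
  assumes bal: "balanced_map r l b"
  shows "tensor_map_iso r l b \<longleftrightarrow>
    surj (free_ext b) \<and> (\<forall>x. free_ext b x = 0 \<longrightarrow> x \<in> tensor_rel r l)"
proof -
  define E where "E = {(x, y). x - y \<in> tensor_rel r l}"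
  have "equiv UNIV E"
  proof (rule equivI)
    show "refl E" by (rule refl_onI) (simp_all add: E_def tensor_rel.zero)
    show "sym E"
      using tensor_rel_uminus by (fastforce simp: E_def intro: symI)
    show "trans E"
    proof (rule transI)
      fix x y z assume "(x, y) \<in> E" "(y, z) \<in> E"
      then show "(x, z) \<in> E"
        using tensor_rel_add[of "x - y" r l "y - z"] by (simp add: E_def)
    qed
  qed simp
  moreover have "free_ext b respects E"
    using free_ext_tensor_rel_eq_0[OF bal] by (force simp: congruent_def E_def free_ext_diff)
  ultimately have "tensor_map_iso r l b \<longleftrightarrow>
      surj (free_ext b) \<and> (\<forall>x y. free_ext b x = free_ext b y \<longrightarrow> (x, y) \<in> E)"
    by (simp add: tensor_map_iso_def tensor_space_def univ_def[symmetric] bij_betw_univ_quotient_iff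
        flip: E_def)
  also have "\<dots> \<longleftrightarrow> surj (free_ext b) \<and> (\<forall>x. free_ext b x = 0 \<longrightarrow> x \<in> tensor_rel r l)"
    unfolding E_def
    by (auto simp: free_ext_diff) (metis diff_zero free_ext_0)
  finally show ?thesis .
qed

lemma tensor_map_iso_transfer:
  assumes bal: "balanced_map r l b" and bal': "balanced_map r' l' b'"
    and iso: "tensor_map_iso r l b"
    and rel: "\<And>x. x \<in> tensor_rel r l \<Longrightarrow> frag_extend g x \<in> tensor_rel r' l'"
    and compat: "\<And>p. free_ext b' (g p) = b p"
    and covers: "\<And>n m. \<exists>y. gen n m - frag_extend g y \<in> tensor_rel r' l'"
  shows "tensor_map_iso r' l' b'"
proof -
  from iso have surj: "surj (free_ext b)" and ker: "\<And>y. free_ext b y = 0 \<Longrightarrow> y \<in> tensor_rel r l"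
    by (simp_all add: tensor_map_iso_iff[OF bal])
  have comp: "free_ext b' (frag_extend g y) = free_ext b y" for y
    by (simp add: free_ext_frag_extend compat)
  have "surj (free_ext b')"
    using surj by (metis comp surj_def)
  moreover have "x \<in> tensor_rel r' l'" if "free_ext b' x = 0" for x
  proof -
    obtain y where y: "x - frag_extend g y \<in> tensor_rel r' l'"
      using frag_extend_surj_mod_tensor_rel[OF covers] by blast
    then have "free_ext b y = 0"
      using free_ext_tensor_rel_eq_0[OF bal' y] that by (simp add: free_ext_diff comp)
    then have "frag_extend g y \<in> tensor_rel r' l'"
      by (intro rel ker)
    with y show ?thesis
      using tensor_rel_add by fastforce
  qed
  ultimately show ?thesis
    by (simp add: tensor_map_iso_iff[OF bal'])
qed

lemma t_unital_ring_if_left_t_unital_hom: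
  fixes f :: "'k::ring \<Rightarrow> 'r::ring"
  assumes hom: "ring_hom_nonunital f" and left: "left_t_unital_hom f"
  shows "t_unital_ring TYPE('r)"
proof -
  have f_add: "f (a + b) = f a + f b" and f_mult: "f (a * b) = f a * f b" for a b
    using hom by (simp_all add: ring_hom_nonunital_def)
  let ?act = "\<lambda>k r. f k * (r::'r)" and ?\<mu> = "\<lambda>(k, r). f k * (r::'r)"
  let ?g = "\<lambda>(k, r::'r). gen (f k) r"
  have bal: "balanced_map (*) ?act ?\<mu>"
    by (simp add: balanced_map_def f_add f_mult algebra_simps)
  have bal': "balanced_map (*) (*) (\<lambda>(r, s). r * (s::'r))"
    by (simp add: balanced_map_def algebra_simps)
  have iso: "tensor_map_iso (*) ?act ?\<mu>"
    using left by (simp add: left_t_unital_hom_def t_unital_left_module_def)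
  have rel: "frag_extend ?g x \<in> tensor_rel (*) (*)" if "x \<in> tensor_rel (*) ?act" for x
    using tensor_rel_frag_extend_gen_map[of f "\<lambda>r. r" "(*)" "(*)" f ?act "(*)", OF f_add _ f_mult _ that]
    by simp
  have compat: "free_ext (\<lambda>(r, s). r * s) (?g p) = ?\<mu> p" for p
    by (cases p) simp
  have covers: "\<exists>y. gen r s - frag_extend ?g y \<in> tensor_rel (*) (*)" for r s :: 'r
  proof -
    obtain y0 where y0: "free_ext ?\<mu> y0 = r"
      using iso by (metis bal tensor_map_iso_iff surj_def)
    have "gen r s - frag_extend (\<lambda>p. gen (?\<mu> p) s) y0 \<in> tensor_rel (*) (*)"
      using tensor_rel_gen_free_ext_left[of ?\<mu> y0 s] by (simp add: y0)
    moreover have "frag_extend (\<lambda>p. gen (?\<mu> p) s) y0 - frag_extend (\<lambda>(k, r). gen (f k) (r * s)) y0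
        \<in> tensor_rel (*) (*)"
      by (rule tensor_rel_frag_extend_cong) (simp add: case_prod_beta tensor_rel.balanced)
    ultimately have "gen r s - frag_extend (\<lambda>(k, r). gen (f k) (r * s)) y0 \<in> tensor_rel (*) (*)"
      using tensor_rel_add by fastforce
    moreover have "frag_extend (\<lambda>(k, r). gen (f k) (r * s)) y0 =
        frag_extend ?g (frag_extend (frag_of \<circ> (\<lambda>(k, r). (k, r * s))) y0)"
      unfolding frag_extend_compose by (simp add: comp_def split_def)
    ultimately show ?thesis by auto
  qed
  show ?thesis
    unfolding t_unital_ring_def
    by (rule tensor_map_iso_transfer[OF bal bal' iso rel compat covers])
qed

lemma t_unital_ring_if_right_t_unital_hom:
  fixes f :: "'k::ring \<Rightarrow> 'r::ring"
  assumes hom: "ring_hom_nonunital f" and right: "right_t_unital_hom f"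
  shows "t_unital_ring TYPE('r)"
proof -
  have f_add: "f (a + b) = f a + f b" and f_mult: "f (a * b) = f a * f b" for a b
    using hom by (simp_all add: ring_hom_nonunital_def)
  let ?act = "\<lambda>r k. (r::'r) * f k" and ?\<mu> = "\<lambda>(r, k). (r::'r) * f k"
  let ?g = "\<lambda>(r::'r, k). gen r (f k)"
  have bal: "balanced_map ?act (*) ?\<mu>"
    by (simp add: balanced_map_def f_add f_mult algebra_simps)
  have bal': "balanced_map (*) (*) (\<lambda>(r, s). r * (s::'r))"
    by (simp add: balanced_map_def algebra_simps)
  have iso: "tensor_map_iso ?act (*) ?\<mu>"
    using right by (simp add: right_t_unital_hom_def t_unital_right_module_def)
  have rel: "frag_extend ?g x \<in> tensor_rel (*) (*)" if "x \<in> tensor_rel ?act (*)" for x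
    using tensor_rel_frag_extend_gen_map[of "\<lambda>r. r" f ?act "(*)" f "(*)" "(*)", OF _ f_add _ f_mult that]
    by simp
  have compat: "free_ext (\<lambda>(r, s). r * s) (?g p) = ?\<mu> p" for p
    by (cases p) simp
  have covers: "\<exists>y. gen r s - frag_extend ?g y \<in> tensor_rel (*) (*)" for r s :: 'r
  proof -
    obtain y0 where y0: "free_ext ?\<mu> y0 = s"
      using iso by (metis bal tensor_map_iso_iff surj_def)
    have "gen r s - frag_extend (\<lambda>p. gen r (?\<mu> p)) y0 \<in> tensor_rel (*) (*)"
      using tensor_rel_gen_free_ext_right[of r ?\<mu> y0] by (simp add: y0)
    moreover have "frag_extend (\<lambda>p. gen r (?\<mu> p)) y0 - frag_extend (\<lambda>(s, k). gen (r * s) (f k)) y0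
        \<in> tensor_rel (*) (*)"
      by (rule tensor_rel_frag_extend_cong)
        (use tensor_rel_uminus[OF tensor_rel.balanced] in \<open>simp add: case_prod_beta\<close>)
    ultimately have "gen r s - frag_extend (\<lambda>(s, k). gen (r * s) (f k)) y0 \<in> tensor_rel (*) (*)"
      using tensor_rel_add by fastforce
    moreover have "frag_extend (\<lambda>(s, k). gen (r * s) (f k)) y0 =
        frag_extend ?g (frag_extend (frag_of \<circ> (\<lambda>(s, k). (r * s, k))) y0)"
      unfolding frag_extend_compose by (simp add: comp_def split_def)
    ultimately show ?thesis by auto
  qed
  show ?thesis
    unfolding t_unital_ring_def
    by (rule tensor_map_iso_transfer[OF bal bal' iso rel compat covers])
qed

theorem proposition9p5:
  fixes f :: "'k::ring \<Rightarrow> 'r::ring"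
  assumes "ring_hom_nonunital f"
    and "left_t_unital_hom f \<or> right_t_unital_hom f"
  shows "t_unital_ring TYPE('r)"
  using assms t_unital_ring_if_left_t_unital_hom t_unital_ring_if_right_t_unital_hom by blast

end
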